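(* Let $G$ be a graph with finite edge set $E(G)$, and let $x$ be fixed. Suppose $p(F,x)$, $F\subseteq E(G)$, are numbers for which there exist a finite measure space $(\Omega,\mathscr{A},\mu)$ and measurable sets $\{A_e\}_{e\in E(G)}$ with $\mu\big(\bigcap_{e\in F}A_e\big)=p(F,x)$ for every $F\subseteq E(G)$ (the empty intersection being $\Omega$), and let $$P(G,x)=\sum_{F\subseteq E(G)}(-1)^{|F|}p(F,x).$$ Call a pair $\{B,\{b\}\}$ with $B\subseteq E(G)$ and $b\in E(G)\setminus B$ a broken pair of $P(G,x)$ if $p(B,x)=p(B\cup\{b\},x)$. Let $\{B_1,B^*_1\},\dots,\{B_k,B^*_k\}$ be broken pairs of $P(G,x)$ (so each $B^*_i=\{b_i\}$ is a single edge not in $B_i$ with $p(B_i,x)=p(B_i\cup\{b_i\},x)$). For $i\in\{1,\dots,k\}$ put $$\mathscr{B}_i=\{F\subseteq E(G):\ F\supseteq B_i,\ \text{and } F\not\supseteq B_j\setminus B^*_i \text{ for every } j<i\},$$ and $\mathscr{B}=\mathscr{B}_1\cup\cdots\cup\mathscr{B}_k$. Then $$P(G,x)=\sum_{F\in 2^{E(G)}\setminus\mathscr{B}}(-1)^{|F|}p(F,x).$$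
   Context: $2^{E(G)}$ denotes the power set of $E(G)$. In the paper, a graph polynomial written in inclusion–exclusion form $P(G,x)=\sum_{F\subseteq E(G)}(-1)^{|F|}p(F,x)$ is interpreted by setting $\mu(\bigcap_{e\in F}A_e)=p(F,x)$; this representation is part of the hypotheses here. *)

theory Defs
  imports "HOL-Analysis.Analysis"
begin

definition graph_poly :: "'e set \<Rightarrow> ('e set \<Rightarrow> 'x \<Rightarrow> real) \<Rightarrow> 'x \<Rightarrow> real" where
  "graph_poly E p x = (\<Sum>F\<in>Pow E. (-1) ^ card F * p F x)"

definition broken_pair :: "'e set \<Rightarrow> ('e set \<Rightarrow> 'x \<Rightarrow> real) \<Rightarrow> 'x \<Rightarrow> 'e set \<Rightarrow> 'e \<Rightarrow> bool" where
  "broken_pair E p x B b \<longleftrightarrow> B \<subseteq> E \<and> b \<in> E - B \<and> p B x = p (insert b B) x"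

definition broken_family :: "'e set \<Rightarrow> (nat \<Rightarrow> 'e set) \<Rightarrow> (nat \<Rightarrow> 'e) \<Rightarrow> nat \<Rightarrow> 'e set set" where
  "broken_family E B b i = {F. F \<subseteq> E \<and> B i \<subseteq> F \<and> (\<forall>j\<in>{1..<i}. \<not> (B j - {b i} \<subseteq> F))}"

end

theory Submission
  imports Defs
begin

text \<open>
  Toggling the edge \<open>b\<^sub>i\<close> is a sign-reversing involution on \<open>\<B>\<^sub>i\<close>: the family is closed under it,
  because no \<open>B\<^sub>j - {b\<^sub>i}\<close> sees \<open>b\<^sub>i\<close>, and it preserves \<open>p\<close>, because \<open>\<mu>(\<Inter>\<^sub>e\<^sub>\<in>\<^sub>B A\<^sub>e - A\<^sub>b) = 0\<close> forces
  \<open>\<mu>(\<Inter>\<^sub>e\<^sub>\<in>\<^sub>F A\<^sub>e - A\<^sub>b) = 0\<close> for every \<open>F \<supseteq> B\<close>. So each \<open>\<B>\<^sub>i\<close> contributes zero, and the families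
  are pairwise disjoint: for \<open>i < j\<close> a member of \<open>\<B>\<^sub>i\<close> contains \<open>B\<^sub>i \<supseteq> B\<^sub>i - {b\<^sub>j}\<close>, which
  members of \<open>\<B>\<^sub>j\<close> must not.
\<close>

lemma alternating_sum_eq_0_if_toggle_invariant:
  fixes q :: "'a set \<Rightarrow> 'b::comm_ring_1"
  assumes fin: "\<And>F. F \<in> S \<Longrightarrow> finite F"
    and closed: "\<And>F. F \<in> S \<Longrightarrow> insert b F \<in> S" "\<And>F. F \<in> S \<Longrightarrow> F - {b} \<in> S"
    and invariant: "\<And>F. F \<in> S \<Longrightarrow> q (insert b F) = q (F - {b})"
  shows "(\<Sum>F\<in>S. (-1) ^ card F * q F) = 0"
proof -
  define h where "h F = (if b \<in> F then F - {b} else insert b F)" for F :: "'a set"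
  show ?thesis
  proof (rule sum_involution_eq_0[where h = h])
    fix F assume F: "F \<in> S"
    show "h F \<in> S" "h (h F) = F" "h F \<noteq> F"
      using closed F unfolding h_def by (auto simp: insert_absorb)
    have "q (h F) = q F"
      using invariant[OF F] unfolding h_def by (cases "b \<in> F") (simp_all add: insert_absorb)
    moreover have "card F = Suc (card (h F)) \<or> card (h F) = Suc (card F)"
    proof (cases "b \<in> F")
      case True
      then show ?thesis using card_Suc_Diff1[OF fin[OF F]] unfolding h_def by simp
    next
      case False
      then show ?thesis using fin[OF F] unfolding h_def by simp
    qed
    ultimately show "(-1) ^ card (h F) * q (h F) + (-1) ^ card F * q F = 0"
      by auto
  qed
qed

lemma (in finite_measure) measure_Int_eq_on_subset:
  assumes "X \<in> sets M" "Y \<in> sets M" "Z \<in> sets M" "Z \<subseteq> X"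
    and "measure M (X \<inter> Y) = measure M X"
  shows "measure M (Z \<inter> Y) = measure M Z"
proof -
  have "measure M (X - Y) = 0"
    using finite_measure_Diff'[of X Y] assms by simp
  moreover have "measure M (Z - Y) \<le> measure M (X - Y)"
    using assms by (intro finite_measure_mono) auto
  ultimately have "measure M (Z - Y) = 0"
    using measure_nonneg[of M "Z - Y"] by linarith
  then show ?thesis
    using finite_measure_Diff'[of Z Y] assms by simp
qed

lemma broken_pair_insert_eq:
  assumes "finite E" "finite_measure M" "\<forall>e\<in>E. A e \<in> sets M"
    and rep: "\<forall>F\<subseteq>E. p F x = measure M (space M \<inter> (\<Inter>e\<in>F. A e))"
    and broken: "broken_pair E p x B b"
    and F: "F \<subseteq> E" "B \<subseteq> F"
  shows "p (insert b F) x = p F x"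
proof -
  interpret finite_measure M by fact
  define cap where "cap F = space M \<inter> (\<Inter>e\<in>F. A e)" for F
  have cap_sets: "cap F \<in> sets M" if "F \<subseteq> E" for F
  proof (cases "F = {}")
    case False
    then have "(\<Inter>e\<in>F. A e) \<in> sets M"
      using that assms(1,3) finite_subset[OF that] by (intro sets.finite_INT) auto
    then show ?thesis unfolding cap_def by blast
  qed (simp add: cap_def)
  have cap_insert: "cap (insert b F) = cap F \<inter> A b" for F
    unfolding cap_def by blast
  have bB: "B \<subseteq> E" "b \<in> E" "p (insert b B) x = p B x"
    using broken unfolding broken_pair_def by auto
  have p_cap: "p F x = measure M (cap F)" if "F \<subseteq> E" for F
    using rep that unfolding cap_def by blast
  have "measure M (cap B \<inter> A b) = measure M (cap B)"
    using bB p_cap[of B] p_cap[of "insert b B"] by (simp add: cap_insert)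
  moreover have "cap F \<subseteq> cap B"
    using F unfolding cap_def by blast
  ultimately have "measure M (cap F \<inter> A b) = measure M (cap F)"
    using measure_Int_eq_on_subset[OF cap_sets[OF bB(1)] _ cap_sets[OF F(1)]] assms(3) bB(2)
    by blast
  then show ?thesis
    using F bB p_cap[of F] p_cap[of "insert b F"] by (simp add: cap_insert)
qed

lemma broken_family_insert_remove:
  assumes "F \<in> broken_family E B b i" "b i \<in> E" "b i \<notin> B i"
  shows "insert (b i) F \<in> broken_family E B b i" "F - {b i} \<in> broken_family E B b i"
  using assms unfolding broken_family_def by blast+

lemma broken_family_disjoint:
  assumes "1 \<le> i" "1 \<le> j" "i \<noteq> j"
  shows "broken_family E B b i \<inter> broken_family E B b j = {}"
proof -
  have "broken_family E B b i \<inter> broken_family E B b j = {}" if "1 \<le> i" "i < j" for i j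
    using that unfolding broken_family_def by auto
  then show ?thesis
    using assms by (metis inf_commute linorder_neqE_nat)
qed

lemma broken_family_alternating_sum_eq_0:
  assumes "finite E" "finite_measure M" "\<forall>e\<in>E. A e \<in> sets M"
    and rep: "\<forall>F\<subseteq>E. p F x = measure M (space M \<inter> (\<Inter>e\<in>F. A e))"
    and broken: "broken_pair E p x (B i) (b i)"
  shows "(\<Sum>F\<in>broken_family E B b i. (-1) ^ card F * p F x) = 0"
proof (rule alternating_sum_eq_0_if_toggle_invariant)
  have bi: "b i \<in> E" "b i \<notin> B i"
    using broken unfolding broken_pair_def by auto
  fix F assume F: "F \<in> broken_family E B b i"
  then have FE: "F \<subseteq> E" "F - {b i} \<subseteq> E" "B i \<subseteq> F - {b i}"
    using bi unfolding broken_family_def by auto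
  then show "finite F"
    using assms(1) finite_subset by blast
  show "insert (b i) F \<in> broken_family E B b i" "F - {b i} \<in> broken_family E B b i"
    using broken_family_insert_remove[OF F bi] by auto
  show "p (insert (b i) F) x = p (F - {b i}) x"
    using broken_pair_insert_eq[OF assms(1-4) broken FE(2,3)] by simp
qed

theorem corollary1:
  fixes E :: "'e set" and p :: "'e set \<Rightarrow> 'x \<Rightarrow> real" and x :: 'x
    and M :: "'w measure" and A :: "'e \<Rightarrow> 'w set"
    and k :: nat and B :: "nat \<Rightarrow> 'e set" and b :: "nat \<Rightarrow> 'e"
  assumes "finite E"
    and "finite_measure M"
    and "\<forall>e\<in>E. A e \<in> sets M"
    and "\<forall>F\<subseteq>E. p F x = measure M (space M \<inter> (\<Inter>e\<in>F. A e))"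
    and "\<forall>i\<in>{1..k}. broken_pair E p x (B i) (b i)"
  shows "graph_poly E p x
           = (\<Sum>F\<in>Pow E - (\<Union>i\<in>{1..k}. broken_family E B b i). (-1) ^ card F * p F x)"
proof -
  define f where "f F = (-1::real) ^ card F * p F x" for F
  define U where "U = (\<Union>i\<in>{1..k}. broken_family E B b i)"
  have family_Pow: "broken_family E B b i \<subseteq> Pow E" for i
    unfolding broken_family_def by auto
  have "sum f U = (\<Sum>i\<in>{1..k}. sum f (broken_family E B b i))"
    unfolding U_def
  proof (rule sum.UNION_disjoint)
    show "\<forall>i\<in>{1..k}. finite (broken_family E B b i)"
      using assms(1) family_Pow by (auto intro: finite_subset)
    show "\<forall>i\<in>{1..k}. \<forall>j\<in>{1..k}. i \<noteq> j \<longrightarrow>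
        broken_family E B b i \<inter> broken_family E B b j = {}"
      using broken_family_disjoint by (meson atLeastAtMost_iff)
  qed simp
  also have "\<dots> = 0"
    using broken_family_alternating_sum_eq_0[where p = p, OF assms(1-4)] assms(5)
    unfolding f_def by simp
  finally have "sum f U = 0" .
  moreover have "sum f (Pow E) = sum f (Pow E - U) + sum f U"
    using sum.subset_diff[of U "Pow E" f] assms(1) family_Pow unfolding U_def by auto
  ultimately show ?thesis
    unfolding graph_poly_def f_def[symmetric] U_def[symmetric] by simp
qed

end
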